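(* Let $(p(n))_{n\ge1}$ and $(q(n))_{n\ge1}$ be nonnegative sequences in $\ell^1$ and let $(g(n))_{n\ge1}$ be a real sequence. Suppose $p(1)\le g(1)$ and $$p(i)\le\sum_{j=1}^{i-1}q(i-j)p(j)+g(i)\qquad\text{for all } i\ge2 .$$ Define $q^{*1}=q$ and, for $k\ge2$, $q^{*k}(i)=\sum_{m=1}^{i-1}q^{*(k-1)}(m)\,q(i-m)$, and $Q(i)=\sum_{k=1}^\infty q^{*k}(i)$. Then $$p(i)\le\sum_{j=1}^{i-1}Q(i-j)g(j)+g(i)\qquad\text{for all } i\ge2 .$$ *)

theory Defs
  imports Complex_Main
begin

text \<open>Sequences indexed by n \<ge> 1 are modelled as functions nat \<Rightarrow> real; the value at 0 is ignored.
  conv_pow q k i is the k-fold convolution power q^{*k}(i) (k \<ge> 1):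
  q^{*1} = q, q^{*k}(i) = sum over m = 1..i-1 of q^{*(k-1)}(m) q(i-m).\<close>

fun conv_pow :: "(nat \<Rightarrow> real) \<Rightarrow> nat \<Rightarrow> nat \<Rightarrow> real" where
  "conv_pow q 0 i = 0"
| "conv_pow q (Suc 0) i = q i"
| "conv_pow q (Suc (Suc k)) i = (\<Sum>m = 1..<i. conv_pow q (Suc k) m * q (i - m))"

definition Qsum :: "(nat \<Rightarrow> real) \<Rightarrow> nat \<Rightarrow> real" where
  "Qsum q i = (\<Sum>k. conv_pow q (Suc k) i)"

end

(* With convolution (a * b)(i) = sum of a(i - j) b(j) over 1 <= j < i, the series Q is the
   finite sum q + q*q + ... (since q^{*k} vanishes below k) and solves the renewal equation
   Q = q + q * Q. By associativity of convolution, B = Q * g + g then solves B = q * B + g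
   with equality, and as q >= 0 a strong induction on i shows that the subsolution p stays
   below B. *)
theory Submission
  imports Defs
begin

definition conv :: "(nat \<Rightarrow> 'a::semiring_0) \<Rightarrow> (nat \<Rightarrow> 'a) \<Rightarrow> nat \<Rightarrow> 'a" where
  "conv a b i = (\<Sum>j = 1..<i. a (i - j) * b j)"

lemma conv_cong:
  assumes "\<And>j. 1 \<le> j \<Longrightarrow> j < i \<Longrightarrow> b j = b' j"
  shows "conv a b i = conv a b' i"
  unfolding conv_def using assms by (intro sum.cong) auto

lemma conv_add_left: "conv (\<lambda>n. a n + a' n) b i = conv a b i + conv a' b i"
  unfolding conv_def by (simp add: distrib_right sum.distrib)

lemma conv_add_right: "conv a (\<lambda>n. b n + b' n) i = conv a b i + conv a b' i"
  unfolding conv_def by (simp add: distrib_left sum.distrib)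

lemma conv_sum_right: "conv a (\<lambda>n. \<Sum>k\<in>K. b k n) i = (\<Sum>k\<in>K. conv a (b k) i)"
  unfolding conv_def by (simp add: sum_distrib_left sum.swap[of _ K])

lemma conv_assoc: "conv a (conv b c) i = conv (conv a b) c i"
proof -
  have "conv a (conv b c) i
      = (\<Sum>j\<in>{1..<i}. \<Sum>l\<in>{l \<in> {1..<i}. l < j}. a (i - j) * (b (j - l) * c l))"
    unfolding conv_def sum_distrib_left
    by (intro sum.cong refl arg_cong[where f = "sum _"]) auto
  also have "\<dots> = (\<Sum>l\<in>{1..<i}. \<Sum>j\<in>{j \<in> {1..<i}. l < j}. a (i - j) * (b (j - l) * c l))"
    by (rule sum.swap_restrict) auto
  also have "\<dots> = (\<Sum>l\<in>{1..<i}. \<Sum>m\<in>{1..<i - l}. a (i - l - m) * (b m * c l))"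
  proof (rule sum.cong[OF refl])
    fix l assume "l \<in> {1..<i}"
    then have shifted: "{j \<in> {1..<i}. l < j} = {1 + l..<(i - l) + l}" by auto
    show "(\<Sum>j\<in>{j \<in> {1..<i}. l < j}. a (i - j) * (b (j - l) * c l))
        = (\<Sum>m\<in>{1..<i - l}. a (i - l - m) * (b m * c l))"
      unfolding shifted sum.shift_bounds_nat_ivl by (simp add: add.commute)
  qed
  also have "\<dots> = conv (conv a b) c i"
    unfolding conv_def by (simp add: sum_distrib_right mult.assoc)
  finally show ?thesis .
qed

lemma conv_pow_Suc_Suc: "conv_pow q (Suc (Suc k)) = conv q (conv_pow q (Suc k))"
  by (simp add: fun_eq_iff conv_def mult.commute)

lemma conv_pow_eq_0: "n \<le> Suc k \<Longrightarrow> conv_pow q (Suc (Suc k)) n = 0"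
proof (induction k arbitrary: n)
  case 0
  then show ?case by simp
next
  case (Suc k)
  then show ?case
    unfolding conv_pow_Suc_Suc conv_def by (intro sum.neutral) auto
qed

lemma Qsum_eq_sum:
  assumes "n < N"
  shows "Qsum q n = (\<Sum>k<N. conv_pow q (Suc k) n)"
  unfolding Qsum_def
proof (rule suminf_finite)
  fix k assume "k \<notin> {..<N}"
  with assms obtain k' where "k = Suc k'" "n \<le> Suc k'" by (cases k) auto
  then show "conv_pow q (Suc k) n = 0" by (metis conv_pow_eq_0)
qed simp

lemma Qsum_renewal: "Qsum q n = q n + conv q (Qsum q) n"
proof -
  have "Qsum q n = (\<Sum>k<Suc n. conv_pow q (Suc k) n)"
    by (rule Qsum_eq_sum) simp
  also have "\<dots> = q n + (\<Sum>k<n. conv q (conv_pow q (Suc k)) n)"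
    unfolding sum.lessThan_Suc_shift conv_pow_Suc_Suc by simp
  also have "(\<Sum>k<n. conv q (conv_pow q (Suc k)) n) = conv q (\<lambda>m. \<Sum>k<n. conv_pow q (Suc k) m) n"
    by (rule conv_sum_right[symmetric])
  also have "\<dots> = conv q (Qsum q) n"
    by (intro conv_cong Qsum_eq_sum[symmetric])
  finally show ?thesis .
qed

lemma renewal_comparison:
  fixes p b q g :: "nat \<Rightarrow> 'a::ordered_semiring_0"
  assumes q_nonneg: "\<And>n. 1 \<le> n \<Longrightarrow> 0 \<le> q n"
    and sub: "\<And>i. 1 \<le> i \<Longrightarrow> p i \<le> conv q p i + g i"
    and sol: "\<And>i. 1 \<le> i \<Longrightarrow> b i = conv q b i + g i"
    and "1 \<le> i"
  shows "p i \<le> b i"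
  using \<open>1 \<le> i\<close>
proof (induction i rule: less_induct)
  case (less i)
  have "conv q p i \<le> conv q b i"
    unfolding conv_def using less.IH q_nonneg by (intro sum_mono mult_left_mono) auto
  then have "conv q p i + g i \<le> b i"
    using sol[OF less.prems] by (simp add: add_right_mono)
  then show ?case
    using sub[OF less.prems] by (rule order_trans[rotated])
qed

lemma renewal_solution:
  "conv q (\<lambda>i. conv (Qsum q) g i + g i) i + g i = conv (Qsum q) g i + g i"
proof -
  have "conv q (\<lambda>i. conv (Qsum q) g i + g i) i = conv (\<lambda>n. conv q (Qsum q) n + q n) g i"
    by (simp add: conv_add_right conv_add_left conv_assoc)
  also have "\<dots> = conv (Qsum q) g i"
    by (simp add: Qsum_renewal[of q, symmetric] add.commute)
  finally show ?thesis by simp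
qed

lemma atLeastAtMost_1_diff_1: "{1..i - 1} = {1..<i::nat}"
  by auto

theorem mainTheorem3:
  fixes p q g :: "nat \<Rightarrow> real"
  assumes p_nonneg: "\<forall>n\<ge>1. p n \<ge> 0"
    and q_nonneg: "\<forall>n\<ge>1. q n \<ge> 0"
    and p_l1: "summable (\<lambda>n. p (n + 1))"
    and q_l1: "summable (\<lambda>n. q (n + 1))"
    and base: "p 1 \<le> g 1"
    and rec: "\<forall>i\<ge>2. p i \<le> (\<Sum>j = 1..i - 1. q (i - j) * p j) + g i"
  shows "\<forall>i\<ge>2. p i \<le> (\<Sum>j = 1..i - 1. Qsum q (i - j) * g j) + g i"
proof (intro allI impI)
  fix i :: nat assume "2 \<le> i"
  have sub: "p n \<le> conv q p n + g n" if "1 \<le> n" for n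
  proof (cases "n = 1")
    case True
    then show ?thesis using base by (simp add: conv_def)
  next
    case False
    with rec that have "p n \<le> (\<Sum>j = 1..n - 1. q (n - j) * p j) + g n" by auto
    then show ?thesis by (simp only: conv_def atLeastAtMost_1_diff_1)
  qed
  have "p i \<le> conv (Qsum q) g i + g i"
  proof (rule renewal_comparison[where q = q and g = g])
    show "conv (Qsum q) g n + g n = conv q (\<lambda>i. conv (Qsum q) g i + g i) n + g n" for n
      by (rule renewal_solution[symmetric])
  qed (use q_nonneg sub \<open>2 \<le> i\<close> in auto)
  then show "p i \<le> (\<Sum>j = 1..i - 1. Qsum q (i - j) * g j) + g i"
    by (simp only: conv_def atLeastAtMost_1_diff_1)
qed

end
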